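(* Let $1\le k_0<p$ with $k_0\ge n$. Then for every $\gamma<1/2$ and every integer $1\le\Delta\le p-k_0$, one has $\rho^*_{\gamma}[k_0,\Delta]=\infty$; that is, for every $\rho>0$ and every test $\phi$, $R(\phi;k_0,\Delta,\rho)>\gamma$.
   Context: Model: for integers $n,p\ge1$, an unknown $\theta^*\in\mathbb R^p$, $\sigma>0$ and a $p\times p$ covariance matrix $\Sigma$, one observes $(Y,\mathbf X)$ where the rows of $\mathbf X\in\mathbb R^{n\times p}$ are i.i.d. $\mathcal N(0,\Sigma)$, $\epsilon\sim\mathcal N(0,I_n)$ is independent of $\mathbf X$, and $Y=\mathbf X\theta^*+\sigma\epsilon$. $\mathbb P_{\theta^*,\Sigma,\sigma}$ denotes the law of $(Y,\mathbf X)$. $\|\theta\|_0$ is the number of nonzero entries of $\theta$; $\mathbb B_0[k]=\{\theta\in\mathbb R^p:\|\theta\|_0\le k\}$; $d_2(\theta,A)=\inf_{u\in A}\|\theta-u\|_2$. Independent setting: $\Sigma=I_p$ and $\sigma>0$ is fixed and known. A test is a measurable $\{0,1\}$-valued function $\phi$ of $(Y,\mathbf X)$. For $\rho>0$, $R(\phi;k_0,\Delta,\rho)=\sup_{\theta\in\mathbb B_0[k_0]}\mathbb P_{\theta,I_p,\sigma}[\phi=1]+\sup_{\theta\in\mathbb B_0[k_0+\Delta],\,d_2(\theta,\mathbb B_0[k_0])\ge\rho\sigma}\mathbb P_{\theta,I_p,\sigma}[\phi=0]$; $\rho_\gamma(\phi;k_0,\Delta)=\sup\{\rho>0:R(\phi;k_0,\Delta,\rho)>\gamma\}$;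 the minimax separation distance is $\rho^*_\gamma[k_0,\Delta]=\inf_\phi\rho_\gamma(\phi;k_0,\Delta)$. *)

theory Defs
  imports "HOL-Probability.Probability"
begin

definition gauss :: "real measure" where
  "gauss = density lborel (\<lambda>x. ennreal (std_normal_density x))"

text \<open>Vectors in R^p are functions nat => real vanishing outside {..<p}.\<close>
definition vecs :: "nat \<Rightarrow> (nat \<Rightarrow> real) set" where
  "vecs p = {\<theta>. \<forall>j\<ge>p. \<theta> j = 0}"

definition l0 :: "nat \<Rightarrow> (nat \<Rightarrow> real) \<Rightarrow> nat" where
  "l0 p \<theta> = card {j\<in>{..<p}. \<theta> j \<noteq> 0}"

definition B0 :: "nat \<Rightarrow> nat \<Rightarrow> (nat \<Rightarrow> real) set" where
  "B0 p k = {\<theta> \<in> vecs p. l0 p \<theta> \<le> k}"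

definition l2dist :: "nat \<Rightarrow> (nat \<Rightarrow> real) \<Rightarrow> (nat \<Rightarrow> real) \<Rightarrow> real" where
  "l2dist p \<theta> u = sqrt (\<Sum>j<p. (\<theta> j - u j)\<^sup>2)"

definition d2 :: "nat \<Rightarrow> (nat \<Rightarrow> real) \<Rightarrow> (nat \<Rightarrow> real) set \<Rightarrow> real" where
  "d2 p \<theta> A = Inf ((\<lambda>u. l2dist p \<theta> u) ` A)"

text \<open>Observation space: pairs (Y, X) with Y in R^n and X an n x p matrix
  (indexed by pairs (i,j), i<n, j<p).\<close>
definition obs_space :: "nat \<Rightarrow> nat \<Rightarrow> ((nat \<Rightarrow> real) \<times> (nat \<times> nat \<Rightarrow> real)) measure" where
  "obs_space n p = (PiM {..<n} (\<lambda>_. borel)) \<Otimes>\<^sub>M (PiM ({..<n} \<times> {..<p}) (\<lambda>_. borel))"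

text \<open>Underlying randomness (epsilon, X): all entries i.i.d. N(0,1)
  (independent setting, Sigma = I_p).\<close>
definition noise_space :: "nat \<Rightarrow> nat \<Rightarrow> ((nat \<Rightarrow> real) \<times> (nat \<times> nat \<Rightarrow> real)) measure" where
  "noise_space n p = (PiM {..<n} (\<lambda>_. gauss)) \<Otimes>\<^sub>M (PiM ({..<n} \<times> {..<p}) (\<lambda>_. gauss))"

definition obs_map :: "nat \<Rightarrow> nat \<Rightarrow> real \<Rightarrow> (nat \<Rightarrow> real) \<Rightarrow>
    (nat \<Rightarrow> real) \<times> (nat \<times> nat \<Rightarrow> real) \<Rightarrow> (nat \<Rightarrow> real) \<times> (nat \<times> nat \<Rightarrow> real)" where
  "obs_map n p \<sigma> \<theta> = (\<lambda>(e, X). ((\<lambda>i\<in>{..<n}. (\<Sum>j<p. X (i, j) * \<theta> j) + \<sigma> * e i), X))"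

definition law :: "nat \<Rightarrow> nat \<Rightarrow> real \<Rightarrow> (nat \<Rightarrow> real) \<Rightarrow> ((nat \<Rightarrow> real) \<times> (nat \<times> nat \<Rightarrow> real)) measure" where
  "law n p \<sigma> \<theta> = distr (noise_space n p) (obs_space n p) (obs_map n p \<sigma> \<theta>)"

definition is_test :: "nat \<Rightarrow> nat \<Rightarrow> ((nat \<Rightarrow> real) \<times> (nat \<times> nat \<Rightarrow> real) \<Rightarrow> nat) \<Rightarrow> bool" where
  "is_test n p \<phi> \<longleftrightarrow> \<phi> \<in> measurable (obs_space n p) (count_space UNIV)
     \<and> (\<forall>\<omega>. \<phi> \<omega> \<in> {0, 1})"

definition rej_prob :: "nat \<Rightarrow> nat \<Rightarrow> real \<Rightarrow> (nat \<Rightarrow> real) \<Rightarrow>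
    ((nat \<Rightarrow> real) \<times> (nat \<times> nat \<Rightarrow> real) \<Rightarrow> nat) \<Rightarrow> nat \<Rightarrow> real" where
  "rej_prob n p \<sigma> \<theta> \<phi> b = measure (law n p \<sigma> \<theta>) {\<omega> \<in> space (obs_space n p). \<phi> \<omega> = b}"

definition risk :: "nat \<Rightarrow> nat \<Rightarrow> real \<Rightarrow> ((nat \<Rightarrow> real) \<times> (nat \<times> nat \<Rightarrow> real) \<Rightarrow> nat)
    \<Rightarrow> nat \<Rightarrow> nat \<Rightarrow> real \<Rightarrow> real" where
  "risk n p \<sigma> \<phi> k0 \<Delta> \<rho> =
     Sup ((\<lambda>\<theta>. rej_prob n p \<sigma> \<theta> \<phi> 1) ` B0 p k0)
   + Sup ((\<lambda>\<theta>. rej_prob n p \<sigma> \<theta> \<phi> 0) `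
          {\<theta> \<in> B0 p (k0 + \<Delta>). d2 p \<theta> (B0 p k0) \<ge> \<rho> * \<sigma>})"

end

theory Submission
  imports Defs "Jordan_Normal_Form.Determinant"
begin

text \<open>Almost surely the first \<open>n \<le> k0\<close> columns of the Gaussian design are linearly
  independent, so column \<open>k0\<close> is \<open>X c\<close> for some \<open>c\<close> supported on them. Hence the alternative
  \<open>\<theta> + \<rho>\<sigma> e\<^sub>k\<^sub>0\<close>, with \<open>\<theta>\<close> supported on the first \<open>k0\<close> coordinates, yields exactly the same data
  as the null parameter \<open>\<theta> + \<rho>\<sigma> c\<close>. If \<open>\<theta>\<close> is drawn uniformly from a cube of side \<open>W\<close>, a shift by
  the fixed vector \<open>\<rho>\<sigma> c\<close> changes the law of \<open>\<theta>\<close> by \<open>O(1/W)\<close> in total variation, so the averaged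
  rejection probabilities under these nulls and alternatives become equal as \<open>W \<rightarrow> \<infinity>\<close>, and the
  two error probabilities add up to at least \<open>1\<close>.\<close>

lemma prob_space_gauss: "prob_space gauss"
  unfolding gauss_def using prob_space_normal_density by simp

lemma sets_gauss [measurable_cong]: "sets gauss = sets borel"
  unfolding gauss_def by simp

lemma emeasure_gauss_singleton: "emeasure gauss {c} = 0"
proof -
  have "AE x in lborel. x \<in> {c} \<longrightarrow> ennreal (std_normal_density x) = 0"
    using AE_lborel_singleton[of c] by (rule eventually_mono) simp
  then have "{c} \<in> null_sets gauss"
    unfolding gauss_def by (subst null_sets_density_iff) auto
  then show ?thesis by auto
qed

lemma det_mat_fun_upd_corner:
  fixes X :: "nat \<times> nat \<Rightarrow> 'a :: comm_ring_1"
  shows "det (mat (Suc m) (Suc m) (X((m,m) := x))) =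
     x * det (mat m m X) + det (mat (Suc m) (Suc m) (X((m,m) := 0)))"
proof -
  let ?A = "mat (Suc m) (Suc m) X"
  let ?M = "\<lambda>y. mat (Suc m) (Suc m) (X((m,m) := y))"
  have cofactor_upd: "cofactor (?M y) m j = cofactor ?A m j" if "j < Suc m" for y j
  proof -
    have "mat_delete (?M y) m j = mat_delete ?A m j"
      unfolding mat_delete_def using that by (intro eq_matI) auto
    then show ?thesis unfolding cofactor_def by simp
  qed
  have expand: "det (?M y) = (\<Sum>j<m. X (m,j) * cofactor ?A m j) + y * cofactor ?A m m" for y
  proof -
    have "det (?M y) = (\<Sum>j<Suc m. ?M y $$ (m,j) * cofactor (?M y) m j)"
      by (rule laplace_expansion_row) auto
    also have "\<dots> = (\<Sum>j<Suc m. ?M y $$ (m,j) * cofactor ?A m j)"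
      by (rule sum.cong) (auto simp: cofactor_upd)
    finally show ?thesis by (simp add: sum.lessThan_Suc)
  qed
  have "mat_delete ?A m m = mat m m X"
    unfolding mat_delete_def by (rule eq_matI) auto
  then have "cofactor ?A m m = det (mat m m X)"
    unfolding cofactor_def by (simp flip: power_mult_distrib)
  then show ?thesis using expand[of x] expand[of 0] by simp
qed

lemma det_mat_fun_upd_corner_eq_0:
  fixes X :: "nat \<times> nat \<Rightarrow> 'a :: field"
  assumes "det (mat m m X) \<noteq> 0" and "det (mat (Suc m) (Suc m) (X((m,m) := x))) = 0"
  shows "x = - det (mat (Suc m) (Suc m) (X((m,m) := 0))) / det (mat m m X)"
proof -
  have "x * det (mat m m X) + det (mat (Suc m) (Suc m) (X((m,m) := 0))) = 0"
    using assms(2) det_mat_fun_upd_corner[of m X x] by simp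
  then have "x * det (mat m m X) = - det (mat (Suc m) (Suc m) (X((m,m) := 0)))"
    by (simp add: eq_neg_iff_add_eq_0)
  with assms(1) show ?thesis by (simp add: field_simps)
qed

lemma borel_measurable_det_mat:
  fixes M :: "real measure"
  assumes "{..<m} \<times> {..<m} \<subseteq> I" and "sets M = sets borel"
  shows "(\<lambda>X. det (mat m m X)) \<in> borel_measurable (PiM I (\<lambda>_. M))"
proof -
  have det_eq: "det (mat m m X) = (\<Sum>\<pi> | \<pi> permutes {0..<m}. signof \<pi> * (\<Prod>i = 0..<m. X (i, \<pi> i)))"
    for X :: "nat \<times> nat \<Rightarrow> real"
    by (subst det_def'[of _ m]) (auto intro!: sum.cong prod.cong simp: permutes_in_image)
  have entry: "(\<lambda>X. X z) \<in> borel_measurable (PiM I (\<lambda>_. M))" if "z \<in> I" for z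
    using measurable_component_singleton[OF that, of "\<lambda>_. M"]
    unfolding measurable_cong_sets[OF refl assms(2)] .
  show ?thesis unfolding det_eq
  proof (intro borel_measurable_sum borel_measurable_times borel_measurable_const borel_measurable_prod)
    fix \<pi> i assume "\<pi> \<in> {\<pi>. \<pi> permutes {0..<m}}" "i \<in> {0..<m}"
    then have "(i, \<pi> i) \<in> I" using assms(1) permutes_in_image[of \<pi> "{0..<m}" i] by auto
    then show "(\<lambda>X. X (i, \<pi> i)) \<in> borel_measurable (PiM I (\<lambda>_. M))" by (rule entry)
  qed
qed

text \<open>Induction on the size of the leading minor: expanding along the new corner entry, the
  minor is affine in that entry with slope the previous minor, so given the other entries it
  vanishes for at most one value of it.\<close>
lemma AE_det_mat_nonzero:
  fixes M :: "real measure"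
  assumes M: "prob_space M" "sets M = sets borel" "\<And>c. emeasure M {c} = 0"
    and I: "finite I" "{..<m} \<times> {..<m} \<subseteq> I"
  shows "AE X in PiM I (\<lambda>_. M). det (mat m m X) \<noteq> (0::real)"
  using I(2)
proof (induction m)
  case 0
  show ?case by (simp add: det_def)
next
  case (Suc m)
  let ?Q = "PiM I (\<lambda>_. M)"
  define z where "z = (m, m)"
  have zI: "z \<in> I" using Suc.prems by (auto simp: z_def)
  have IH: "AE X in ?Q. det (mat m m X) \<noteq> 0"
    using Suc.prems by (intro Suc.IH) auto
  define Bad where "Bad = {X \<in> space ?Q. det (mat m m X) \<noteq> 0 \<and> det (mat (Suc m) (Suc m) X) = 0}"
  have Bad_sets: "Bad \<in> sets ?Q"
  proof -
    have "(\<lambda>X. det (mat k k X)) \<in> borel_measurable ?Q" if "k \<le> Suc m" for k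
      using Suc.prems that M(2) by (intro borel_measurable_det_mat) auto
    then show ?thesis unfolding Bad_def by measurable
  qed
  interpret product_prob_space "\<lambda>_::nat \<times> nat. M"
    unfolding product_prob_space_def product_prob_space_axioms_def product_sigma_finite_def
    using M(1) prob_space_imp_sigma_finite by auto
  have section_null: "(\<integral>\<^sup>+ x. indicator Bad (X(z := x)) \<partial>M) = 0" for X
  proof -
    define c where "c = - det (mat (Suc m) (Suc m) (X(z := 0))) / det (mat m m X)"
    have "indicator Bad (X(z := x)) \<le> (indicator {c} x :: ennreal)" for x
    proof (cases "X(z := x) \<in> Bad")
      case True
      have "mat m m (X(z := x)) = mat m m X" by (rule eq_matI) (auto simp: z_def)
      with True have "x = c"
        unfolding c_def z_def by (intro det_mat_fun_upd_corner_eq_0) (auto simp: Bad_def z_def)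
      then show ?thesis by (simp add: indicator_def)
    qed simp
    then have "(\<integral>\<^sup>+ x. indicator Bad (X(z := x)) \<partial>M) \<le> (\<integral>\<^sup>+ x. indicator {c} x \<partial>M)"
      by (rule nn_integral_mono)
    also have "\<dots> = 0" using M(2,3) by simp
    finally show ?thesis by simp
  qed
  have Q_eq: "PiM (insert z (I - {z})) (\<lambda>_. M) = ?Q" using zI by (simp add: insert_absorb)
  have "emeasure ?Q Bad = (\<integral>\<^sup>+ X. indicator Bad X \<partial>PiM (insert z (I - {z})) (\<lambda>_. M))"
    unfolding Q_eq using Bad_sets by simp
  also have "\<dots> = (\<integral>\<^sup>+ X. (\<integral>\<^sup>+ x. indicator Bad (X(z := x)) \<partial>M) \<partial>PiM (I - {z}) (\<lambda>_. M))"
    using I(1) Bad_sets unfolding Q_eq[symmetric]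
    by (intro product_nn_integral_insert) auto
  also have "\<dots> = 0" by (simp add: section_null)
  finally have "AE X in ?Q. X \<notin> Bad" using Bad_sets by (intro AE_not_in) auto
  with IH AE_space show ?case by eventually_elim (auto simp: Bad_def)
qed

lemma det_mat_nonzero_imp_solvable:
  fixes X :: "nat \<times> nat \<Rightarrow> 'a :: field"
  assumes "det (mat n n X) \<noteq> 0"
  shows "\<exists>c. \<forall>i<n. (\<Sum>j<n. X (i,j) * c j) = b i"
proof -
  define A where "A = mat n n X"
  have A: "A \<in> carrier_mat n n" by (simp add: A_def)
  define D where "D = adj_mat A"
  have D: "D \<in> carrier_mat n n" using adj_mat(1)[OF A] by (simp add: D_def)
  have adj: "(\<Sum>j<n. X (i,j) * D $$ (j,l)) = (if i = l then det A else 0)" if "i < n" "l < n" for i l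
  proof -
    have "(A * D) $$ (i,l) = (\<Sum>j<n. X (i,j) * D $$ (j,l))"
      using A D that by (simp add: scalar_prod_def A_def atLeast0LessThan)
    then show ?thesis using adj_mat(2)[OF A] that by (auto simp: D_def split: if_splits)
  qed
  define c where "c j = (\<Sum>l<n. D $$ (j,l) * b l) / det A" for j
  have "(\<Sum>j<n. X (i,j) * c j) = b i" if i: "i < n" for i
  proof -
    have "(\<Sum>j<n. X (i,j) * c j) = (\<Sum>j<n. \<Sum>l<n. X (i,j) * D $$ (j,l) * b l) / det A"
      unfolding c_def by (simp add: sum_divide_distrib sum_distrib_left mult.assoc)
    also have "\<dots> = (\<Sum>l<n. (\<Sum>j<n. X (i,j) * D $$ (j,l)) * b l) / det A"
      by (subst sum.swap) (simp add: sum_distrib_right)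
    also have "\<dots> = (\<Sum>l<n. (if i = l then det A * b l else 0)) / det A"
      using i by (intro arg_cong[where f="\<lambda>x. x / det A"] sum.cong) (auto simp: adj)
    also have "\<dots> = b i" using i assms by (simp add: A_def)
    finally show ?thesis .
  qed
  then show ?thesis by blast
qed

lemma emeasure_PiM_lborel_box:
  assumes "finite I"
  shows "emeasure (PiM I (\<lambda>_. lborel)) (PiE I (\<lambda>i. {\<alpha> i..\<beta> i :: real})) =
    ennreal (\<Prod>i\<in>I. max 0 (\<beta> i - \<alpha> i))"
proof -
  interpret product_sigma_finite "\<lambda>_::'i. lborel :: real measure"
    by (simp add: product_sigma_finite_def lborel.sigma_finite_measure_axioms)
  have "emeasure (PiM I (\<lambda>_. lborel)) (PiE I (\<lambda>i. {\<alpha> i..\<beta> i})) =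
      (\<Prod>i\<in>I. emeasure lborel {\<alpha> i..\<beta> i})"
    using assms by (intro emeasure_PiM) auto
  also have "\<dots> = (\<Prod>i\<in>I. ennreal (max 0 (\<beta> i - \<alpha> i)))"
    by (intro prod.cong) (auto simp: emeasure_lborel_Icc_eq max_def)
  also have "\<dots> = ennreal (\<Prod>i\<in>I. max 0 (\<beta> i - \<alpha> i))"
    by (rule prod_ennreal) simp
  finally show ?thesis .
qed

lemma measure_PiM_lborel_box:
  assumes "finite I"
  shows "measure (PiM I (\<lambda>_. lborel)) (PiE I (\<lambda>i. {\<alpha> i..\<beta> i :: real})) =
    (\<Prod>i\<in>I. max 0 (\<beta> i - \<alpha> i))"
  unfolding measure_def emeasure_PiM_lborel_box[OF assms] by (simp add: prod_nonneg)

lemma box_in_sets_PiM_lborel: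
  "finite I \<Longrightarrow> PiE I (\<lambda>i. {\<alpha> i..\<beta> i}) \<in> sets (PiM I (\<lambda>_. lborel :: real measure))"
  by (rule sets_PiM_I_finite) auto

lemma distr_PiM_lborel_translate:
  fixes d :: "'i \<Rightarrow> real"
  assumes I: "finite I"
  shows "distr (PiM I (\<lambda>_. lborel)) (PiM I (\<lambda>_. lborel)) (\<lambda>\<theta>. \<lambda>i\<in>I. \<theta> i + d i) =
    PiM I (\<lambda>_. lborel)"
proof -
  interpret product_sigma_finite "\<lambda>_::'i. lborel :: real measure"
    by (simp add: product_sigma_finite_def lborel.sigma_finite_measure_axioms)
  let ?P = "PiM I (\<lambda>_. lborel :: real measure)"
  let ?T = "\<lambda>\<theta>. \<lambda>i\<in>I. \<theta> i + d i"
  have T: "?T \<in> measurable ?P ?P" by measurable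
  show ?thesis
  proof (rule PiM_eqI[OF I])
    fix A :: "'i \<Rightarrow> real set" assume A: "\<And>i. i \<in> I \<Longrightarrow> A i \<in> sets lborel"
    have shift_sets: "(\<lambda>x. d i + x) -` A i \<in> sets lborel" if "i \<in> I" for i
    proof -
      have "(\<lambda>x. d i + x) \<in> borel_measurable borel" by measurable
      from measurable_sets_borel[OF this, of "A i"] show ?thesis using A[OF that] by simp
    qed
    have "?T -` PiE I A \<inter> space ?P = PiE I (\<lambda>i. (\<lambda>x. d i + x) -` A i)"
      by (auto simp: space_PiM PiE_def Pi_def extensional_def add.commute)
    then have "emeasure (distr ?P ?P ?T) (PiE I A) = emeasure ?P (PiE I (\<lambda>i. (\<lambda>x. d i + x) -` A i))"
      using A I by (subst emeasure_distr[OF T]) (auto intro: sets_PiM_I_finite)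
    also have "\<dots> = (\<Prod>i\<in>I. emeasure lborel ((\<lambda>x. d i + x) -` A i))"
      using I shift_sets by (intro emeasure_PiM) auto
    also have "\<dots> = (\<Prod>i\<in>I. emeasure lborel (A i))"
    proof (rule prod.cong[OF refl])
      fix i assume i: "i \<in> I"
      have "emeasure lborel (A i) = emeasure (distr lborel borel ((+) (d i))) (A i)"
        by (simp add: lborel_distr_plus)
      also have "\<dots> = emeasure lborel ((\<lambda>x. d i + x) -` A i)"
        using A[OF i] by (subst emeasure_distr) auto
      finally show "emeasure lborel ((\<lambda>x. d i + x) -` A i) = emeasure lborel (A i)" ..
    qed
    finally show "emeasure (distr ?P ?P ?T) (PiE I A) = (\<Prod>i\<in>I. emeasure lborel (A i))" .
  qed simp
qed

lemma PiM_lborel_cube_translate_le: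
  fixes d :: "'i \<Rightarrow> real" and a W :: real
  assumes I: "finite I" and W: "W > 0" and S: "S \<in> sets (PiM I (\<lambda>_. lborel))"
  defines "P \<equiv> PiM I (\<lambda>_. lborel :: real measure)" and "B \<equiv> PiE I (\<lambda>_. {a..a+W})"
  shows "measure P (B \<inter> {\<theta> \<in> space P. (\<lambda>i\<in>I. \<theta> i + d i) \<in> S})
     \<le> measure P (B \<inter> S) + (W ^ card I - (\<Prod>i\<in>I. max 0 (W - \<bar>d i\<bar>)))"
proof -
  define B' where "B' = PiE I (\<lambda>i. {a + d i..a + W + d i})"
  define T where "T = (\<lambda>\<theta>. \<lambda>i\<in>I. \<theta> i + d i)"
  have sets: "B \<in> sets P" "B' \<in> sets P" "S \<in> sets P"
    using S I unfolding B_def B'_def P_def by (auto intro: box_in_sets_PiM_lborel)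
  have T: "T \<in> measurable P P" unfolding T_def P_def by measurable
  have vol: "emeasure P B' = ennreal (W ^ card I)" "B \<in> fmeasurable P" "B' \<in> fmeasurable P"
    using W I sets unfolding P_def B_def B'_def by (auto simp: emeasure_PiM_lborel_box intro: fmeasurableI)
  have "B' \<inter> B = PiE I (\<lambda>i. {max a (a + d i)..min (a + W) (a + W + d i)})"
    unfolding B_def B'_def by (auto simp: PiE_def Pi_def)
  then have overlap: "measure P (B' \<inter> B) = (\<Prod>i\<in>I. max 0 (W - \<bar>d i\<bar>))"
    unfolding P_def using I
    by (simp add: measure_PiM_lborel_box) (intro prod.cong; auto simp: max_def min_def abs_if)
  have "B \<inter> {\<theta> \<in> space P. T \<theta> \<in> S} = T -` (S \<inter> B') \<inter> space P"
  proof -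
    have "\<theta> \<in> B \<longleftrightarrow> T \<theta> \<in> B'" if "\<theta> \<in> space P" for \<theta>
      using that unfolding B_def B'_def T_def P_def
      by (auto simp: space_PiM PiE_def Pi_def extensional_def)
    then show ?thesis using sets.sets_into_space[OF sets(1)] by blast
  qed
  then have "measure P (B \<inter> {\<theta> \<in> space P. T \<theta> \<in> S}) = measure (distr P P T) (S \<inter> B')"
    using sets by (simp add: measure_distr[OF T])
  also have "distr P P T = P"
    unfolding P_def T_def using I by (rule distr_PiM_lborel_translate)
  also have "measure P (S \<inter> B') \<le> measure P ((B \<inter> S) \<union> (B' - B))"
    using sets vol by (intro measure_mono_fmeasurable) (auto intro: fmeasurable_Int_fmeasurable)
  also have "\<dots> \<le> measure P (B \<inter> S) + measure P (B' - B' \<inter> B)"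
    using sets by (simp add: Diff_Int measure_Un_le)
  also have "measure P (B' - B' \<inter> B) = W ^ card I - (\<Prod>i\<in>I. max 0 (W - \<bar>d i\<bar>))"
    using sets vol W overlap by (subst measure_Diff) (auto simp: measure_def)
  finally show ?thesis unfolding T_def .
qed

lemma uniform_cube_translate_le:
  fixes d :: "'i \<Rightarrow> real" and a W :: real
  assumes I: "finite I" and W: "W > 0" and S: "S \<in> sets (PiM I (\<lambda>_. lborel))"
  defines "P \<equiv> PiM I (\<lambda>_. lborel :: real measure)"
    and "\<pi> \<equiv> uniform_measure (PiM I (\<lambda>_. lborel)) (PiE I (\<lambda>_. {a..a+W}))"
  shows "measure \<pi> {\<theta> \<in> space P. (\<lambda>i\<in>I. \<theta> i + d i) \<in> S}
     \<le> measure \<pi> S + (1 - (\<Prod>i\<in>I. max 0 (W - \<bar>d i\<bar>)) / W ^ card I)"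
proof -
  define B where "B = PiE I (\<lambda>_. {a..a+W})"
  define S' where "S' = {\<theta> \<in> space P. (\<lambda>i\<in>I. \<theta> i + d i) \<in> S}"
  have "(\<lambda>\<theta>. \<lambda>i\<in>I. \<theta> i + d i) \<in> measurable P P" unfolding P_def by measurable
  from measurable_sets[OF this, of S] have S'_sets: "S' \<in> sets P"
    using S unfolding S'_def P_def by (simp add: vimage_def Int_def conj_commute)
  have B: "B \<in> sets P" "emeasure P B = ennreal (W ^ card I)"
    using W I unfolding P_def B_def by (simp_all add: box_in_sets_PiM_lborel emeasure_PiM_lborel_box)
  have "measure P B = W ^ card I" using B W by (simp add: measure_def)
  then have \<pi>: "measure \<pi> A = measure P (B \<inter> A) / W ^ card I" if "A \<in> sets P" for A
    using B W that unfolding \<pi>_def P_def[symmetric] B_def[symmetric] by simp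
  have "measure \<pi> S' \<le> (measure P (B \<inter> S) + (W ^ card I - (\<Prod>i\<in>I. max 0 (W - \<bar>d i\<bar>)))) / W ^ card I"
    unfolding \<pi>[OF S'_sets] using W
    by (intro divide_right_mono) (simp_all add: PiM_lborel_cube_translate_le[OF I W S] S'_def B_def P_def)
  also have "\<dots> = measure \<pi> S + (1 - (\<Prod>i\<in>I. max 0 (W - \<bar>d i\<bar>)) / W ^ card I)"
    using W S by (simp add: \<pi> P_def add_divide_distrib diff_divide_distrib)
  finally show ?thesis unfolding S'_def .
qed

lemma cube_overlap_tendsto_1:
  fixes d :: "'i \<Rightarrow> real"
  shows "(\<lambda>m. (\<Prod>i\<in>I. max 0 (real (Suc m) - \<bar>d i\<bar>)) / real (Suc m) ^ card I) \<longlonglongrightarrow> 1"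
proof -
  have ratio: "(\<Prod>i\<in>I. max 0 (W - \<bar>d i\<bar>)) / W ^ card I = (\<Prod>i\<in>I. max 0 (1 - \<bar>d i\<bar> * (1 / W)))"
    if "W > 0" for W :: real
  proof -
    have "(\<Prod>i\<in>I. max 0 (W - \<bar>d i\<bar>)) / W ^ card I = (\<Prod>i\<in>I. max 0 (W - \<bar>d i\<bar>) / W)"
      by (simp add: prod_dividef)
    also have "\<dots> = (\<Prod>i\<in>I. max 0 (1 - \<bar>d i\<bar> * (1 / W)))"
      using that by (intro prod.cong) (auto simp: max_def field_simps)
    finally show ?thesis .
  qed
  have "(\<lambda>m. \<Prod>i\<in>I. max 0 (1 - \<bar>d i\<bar> * (1 / real (Suc m)))) \<longlonglongrightarrow> (\<Prod>i\<in>I. max 0 (1 - \<bar>d i\<bar> * 0))"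
    by (intro tendsto_intros LIMSEQ_Suc[OF lim_inverse_n'])
  then show ?thesis by (simp add: ratio del: of_nat_Suc)
qed

lemma sets_noise_space: "sets (noise_space n p) = sets (obs_space n p)"
  unfolding noise_space_def obs_space_def
  by (intro sets_pair_measure_cong sets_PiM_cong) (auto simp: sets_gauss)

lemma space_noise_space: "space (noise_space n p) = space (obs_space n p)"
  using sets_noise_space by (rule sets_eq_imp_space_eq)

lemma prob_space_noise_space: "prob_space (noise_space n p)"
  unfolding noise_space_def by (intro prob_space_pair prob_space_PiM prob_space_gauss)

lemma measurable_obs_map:
  assumes g: "g \<in> measurable M (obs_space n p)"
    and f: "\<And>j. j < p \<Longrightarrow> (\<lambda>x. f x j) \<in> borel_measurable M"
  shows "(\<lambda>x. obs_map n p \<sigma> (f x) (g x)) \<in> measurable M (obs_space n p)"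
proof -
  have g1: "(\<lambda>x. fst (g x)) \<in> measurable M (PiM {..<n} (\<lambda>_. borel))"
    and g2: "(\<lambda>x. snd (g x)) \<in> measurable M (PiM ({..<n} \<times> {..<p}) (\<lambda>_. borel))"
    using g unfolding obs_space_def by (auto intro: measurable_fst' measurable_snd')
  have "(\<lambda>x. (\<Sum>j<p. snd (g x) (i, j) * f x j) + \<sigma> * fst (g x) i) \<in> borel_measurable M"
    if "i < n" for i
    using that f measurable_compose[OF g1 measurable_component_singleton, of i]
      measurable_compose[OF g2 measurable_component_singleton, of "(i, _)"]
    by (intro borel_measurable_add borel_measurable_times borel_measurable_sum borel_measurable_const)
       auto
  then show ?thesis
    using g2 unfolding obs_map_def obs_space_def
    by (auto simp: case_prod_beta intro!: measurable_Pair measurable_restrict)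
qed

lemma measurable_obs_map_noise:
  "obs_map n p \<sigma> \<theta> \<in> measurable (noise_space n p) (obs_space n p)"
  using measurable_obs_map[OF measurable_ident_sets[OF sets_noise_space], where f="\<lambda>_. \<theta>"] by simp

lemma test_level_set_in_sets:
  assumes "is_test n p \<phi>" and "g \<in> measurable M (obs_space n p)"
  shows "{x \<in> space M. \<phi> (g x) = b} \<in> sets M"
proof -
  have "\<phi> \<in> measurable (obs_space n p) (count_space UNIV)"
    using assms(1) by (simp add: is_test_def)
  with assms(2) show ?thesis by measurable
qed

lemma real_test_eq_if:
  assumes "is_test n p \<phi>"
  shows "real (\<phi> x) = (if \<phi> x = 1 then 1 else 0)"
  using assms unfolding is_test_def by (metis insertE of_nat_0 of_nat_1 singletonD)

lemma rej_prob_eq_noise: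
  assumes "is_test n p \<phi>"
  shows "rej_prob n p \<sigma> \<theta> \<phi> b =
    measure (noise_space n p) {\<omega> \<in> space (noise_space n p). \<phi> (obs_map n p \<sigma> \<theta> \<omega>) = b}"
proof -
  have "{\<omega> \<in> space (obs_space n p). \<phi> \<omega> = b} \<in> sets (obs_space n p)"
    using test_level_set_in_sets[OF assms measurable_ident] by simp
  then show ?thesis
    unfolding rej_prob_def law_def using measurable_space[OF measurable_obs_map_noise]
    by (subst measure_distr[OF measurable_obs_map_noise]) (auto intro!: arg_cong[where f="measure _"])
qed

lemma rej_prob_1_eq_integral:
  assumes "is_test n p \<phi>"
  shows "rej_prob n p \<sigma> \<theta> \<phi> 1 = (\<integral>\<omega>. real (\<phi> (obs_map n p \<sigma> \<theta> \<omega>)) \<partial>noise_space n p)"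
proof -
  let ?C = "{\<omega> \<in> space (noise_space n p). \<phi> (obs_map n p \<sigma> \<theta> \<omega>) = 1}"
  have "(\<integral>\<omega>. real (\<phi> (obs_map n p \<sigma> \<theta> \<omega>)) \<partial>noise_space n p) = (\<integral>\<omega>. indicator ?C \<omega> \<partial>noise_space n p)"
    by (intro Bochner_Integration.integral_cong) (simp_all add: real_test_eq_if[OF assms] indicator_def)
  then show ?thesis using rej_prob_eq_noise[OF assms] by (simp add: Int_absorb2)
qed

lemma prob_space_law: "prob_space (law n p \<sigma> \<theta>)"
  unfolding law_def
  by (rule prob_space.prob_space_distr[OF prob_space_noise_space measurable_obs_map_noise])

lemma rej_prob_le_1: "rej_prob n p \<sigma> \<theta> \<phi> b \<le> 1"
  unfolding rej_prob_def by (rule prob_space.prob_le_1[OF prob_space_law])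

lemma rej_prob_0_eq:
  assumes "is_test n p \<phi>"
  shows "rej_prob n p \<sigma> \<theta> \<phi> 0 = 1 - rej_prob n p \<sigma> \<theta> \<phi> 1"
proof -
  interpret prob_space "law n p \<sigma> \<theta>" by (rule prob_space_law)
  have sp: "space (law n p \<sigma> \<theta>) = space (obs_space n p)" and "sets (law n p \<sigma> \<theta>) = sets (obs_space n p)"
    by (simp_all add: law_def)
  then have "{\<omega> \<in> space (obs_space n p). \<phi> \<omega> = 1} \<in> events"
    using test_level_set_in_sets[OF assms measurable_ident] by simp
  moreover have "{\<omega> \<in> space (obs_space n p). \<phi> \<omega> = 0} = space (law n p \<sigma> \<theta>) - {\<omega> \<in> space (obs_space n p). \<phi> \<omega> = 1}"
    using assms unfolding is_test_def sp by fastforce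
  ultimately show ?thesis unfolding rej_prob_def by (simp add: prob_compl)
qed

lemma borel_measurable_test_obs_map:
  assumes "is_test n p \<phi>" and "\<And>j. j < p \<Longrightarrow> (\<lambda>\<theta>. f \<theta> j) \<in> borel_measurable M"
  shows "(\<lambda>(\<theta>, \<omega>). real (\<phi> (obs_map n p \<sigma> (f \<theta>) \<omega>))) \<in> borel_measurable (M \<Otimes>\<^sub>M noise_space n p)"
proof -
  have "snd \<in> measurable (M \<Otimes>\<^sub>M noise_space n p) (obs_space n p)"
    by (rule measurable_compose[OF measurable_snd measurable_ident_sets[OF sets_noise_space]])
  then have "(\<lambda>x. \<phi> (obs_map n p \<sigma> (f (fst x)) (snd x))) \<in> measurable (M \<Otimes>\<^sub>M noise_space n p) (count_space UNIV)"
    using assms measurable_obs_map[of snd, where f="\<lambda>x. f (fst x)"] unfolding is_test_def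
    by (auto intro: measurable_compose[OF measurable_fst])
  then show ?thesis unfolding case_prod_beta by (rule measurable_compose) simp
qed

definition prior_rejection ::
  "nat \<Rightarrow> nat \<Rightarrow> real \<Rightarrow> ((nat \<Rightarrow> real) \<times> (nat \<times> nat \<Rightarrow> real) \<Rightarrow> nat) \<Rightarrow> 'a measure \<Rightarrow>
    ('a \<Rightarrow> nat \<Rightarrow> real) \<Rightarrow> (nat \<Rightarrow> real) \<times> (nat \<times> nat \<Rightarrow> real) \<Rightarrow> real" where
  "prior_rejection n p \<sigma> \<phi> \<pi> f \<omega> = measure \<pi> {\<theta> \<in> space \<pi>. \<phi> (obs_map n p \<sigma> (f \<theta>) \<omega>) = 1}"

lemma prior_rejection_Fubini:
  assumes \<phi>: "is_test n p \<phi>" and \<pi>: "prob_space \<pi>"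
    and f: "\<And>j. j < p \<Longrightarrow> (\<lambda>\<theta>. f \<theta> j) \<in> borel_measurable \<pi>"
  shows "integrable \<pi> (\<lambda>\<theta>. rej_prob n p \<sigma> (f \<theta>) \<phi> 1)"
    and "integrable (noise_space n p) (prior_rejection n p \<sigma> \<phi> \<pi> f)"
    and "(\<integral>\<theta>. rej_prob n p \<sigma> (f \<theta>) \<phi> 1 \<partial>\<pi>) = (\<integral>\<omega>. prior_rejection n p \<sigma> \<phi> \<pi> f \<omega> \<partial>noise_space n p)"
proof -
  let ?N = "noise_space n p"
  define F where "F \<theta> \<omega> = real (\<phi> (obs_map n p \<sigma> (f \<theta>) \<omega>))" for \<theta> \<omega>
  interpret N: prob_space ?N by (rule prob_space_noise_space)
  interpret \<pi>: prob_space \<pi> by (rule \<pi>)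
  interpret pair_sigma_finite \<pi> ?N by unfold_locales
  interpret prob_space "\<pi> \<Otimes>\<^sub>M ?N" by (rule prob_space_pair) unfold_locales
  have "case_prod F \<in> borel_measurable (\<pi> \<Otimes>\<^sub>M ?N)"
    unfolding F_def using \<phi> f by (rule borel_measurable_test_obs_map)
  moreover have "norm (case_prod F x) \<le> 1" for x
    using real_test_eq_if[OF \<phi>] unfolding F_def by (simp add: case_prod_beta)
  ultimately have F: "integrable (\<pi> \<Otimes>\<^sub>M ?N) (case_prod F)"
    by (intro integrable_const_bound[where B=1]) auto
  have inner_N: "(\<integral>\<omega>. F \<theta> \<omega> \<partial>?N) = rej_prob n p \<sigma> (f \<theta>) \<phi> 1" for \<theta>
    unfolding F_def rej_prob_1_eq_integral[OF \<phi>] ..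
  have inner_\<pi>: "(\<integral>\<theta>. F \<theta> \<omega> \<partial>\<pi>) = prior_rejection n p \<sigma> \<phi> \<pi> f \<omega>" if "\<omega> \<in> space ?N" for \<omega>
  proof -
    have "(\<lambda>_. \<omega>) \<in> measurable \<pi> (obs_space n p)"
      using that by (simp add: space_noise_space)
    then have "{\<theta> \<in> space \<pi>. \<phi> (obs_map n p \<sigma> (f \<theta>) \<omega>) = 1} \<in> sets \<pi>"
      using test_level_set_in_sets[OF \<phi> measurable_obs_map] f by blast
    moreover have "F \<theta> \<omega> = indicator {\<theta> \<in> space \<pi>. \<phi> (obs_map n p \<sigma> (f \<theta>) \<omega>) = 1} \<theta>"
      if "\<theta> \<in> space \<pi>" for \<theta>
      using that real_test_eq_if[OF \<phi>] unfolding F_def by (simp add: indicator_def)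
    ultimately show ?thesis unfolding prior_rejection_def
      by (simp add: Bochner_Integration.integral_cong[OF refl] Int_absorb2 sets.sets_into_space)
  qed
  show "integrable \<pi> (\<lambda>\<theta>. rej_prob n p \<sigma> (f \<theta>) \<phi> 1)"
    using integrable_fst[OF F] by (simp add: inner_N)
  have "integrable ?N (\<lambda>\<omega>. \<integral>\<theta>. F \<theta> \<omega> \<partial>\<pi>) = integrable ?N (prior_rejection n p \<sigma> \<phi> \<pi> f)"
    by (intro Bochner_Integration.integrable_cong) (simp_all add: inner_\<pi>)
  with integrable_snd[OF F] show "integrable ?N (prior_rejection n p \<sigma> \<phi> \<pi> f)" by simp
  show "(\<integral>\<theta>. rej_prob n p \<sigma> (f \<theta>) \<phi> 1 \<partial>\<pi>) = (\<integral>\<omega>. prior_rejection n p \<sigma> \<phi> \<pi> f \<omega> \<partial>?N)"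
    using Fubini_integral[OF F] by (simp add: inner_N inner_\<pi> cong: Bochner_Integration.integral_cong)
qed

lemma AE_noise_column_in_span:
  assumes "n \<le> p"
  shows "AE \<omega> in noise_space n p. \<exists>c. \<forall>i<n. (\<Sum>j<n. snd \<omega> (i,j) * c j) = snd \<omega> (i,k)"
proof -
  let ?E = "PiM {..<n} (\<lambda>_. gauss)" and ?Q = "PiM ({..<n} \<times> {..<p}) (\<lambda>_. gauss)"
  interpret E: prob_space ?E by (intro prob_space_PiM prob_space_gauss)
  interpret Q: prob_space ?Q by (intro prob_space_PiM prob_space_gauss)
  interpret pair_sigma_finite ?E ?Q by unfold_locales
  have minor: "{..<n} \<times> {..<n} \<subseteq> {..<n} \<times> {..<p}" using assms by auto
  have "(\<lambda>x. det (mat n n (snd x))) \<in> borel_measurable (?E \<Otimes>\<^sub>M ?Q)"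
    using borel_measurable_det_mat[OF minor sets_gauss] by measurable
  then have "{x \<in> space (?E \<Otimes>\<^sub>M ?Q). det (mat n n (snd x)) \<noteq> (0::real)} \<in> sets (?E \<Otimes>\<^sub>M ?Q)"
    by measurable
  moreover have "AE y in ?Q. det (mat n n y) \<noteq> (0::real)"
    using prob_space_gauss sets_gauss emeasure_gauss_singleton minor by (intro AE_det_mat_nonzero) auto
  ultimately have "AE x in ?E \<Otimes>\<^sub>M ?Q. det (mat n n (snd x)) \<noteq> (0::real)"
    by (intro AE_pair_measure) auto
  then show ?thesis
    unfolding noise_space_def by eventually_elim (rule det_mat_nonzero_imp_solvable)
qed

definition trunc :: "nat \<Rightarrow> (nat \<Rightarrow> real) \<Rightarrow> nat \<Rightarrow> real" where
  "trunc k \<theta> j = (if j < k then \<theta> j else 0)"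

definition spike :: "nat \<Rightarrow> real \<Rightarrow> (nat \<Rightarrow> real) \<Rightarrow> nat \<Rightarrow> real" where
  "spike k t \<theta> = (trunc k \<theta>)(k := t)"

lemma trunc_in_B0: "k \<le> p \<Longrightarrow> trunc k \<theta> \<in> B0 p k"
proof -
  assume "k \<le> p"
  have "card {j \<in> {..<p}. trunc k \<theta> j \<noteq> 0} \<le> card {..<k}"
    by (intro card_mono) (auto simp: trunc_def)
  with \<open>k \<le> p\<close> show ?thesis by (simp add: B0_def vecs_def l0_def trunc_def)
qed

lemma spike_in_B0: "k < p \<Longrightarrow> k < k' \<Longrightarrow> spike k t \<theta> \<in> B0 p k'"
proof -
  assume "k < p" "k < k'"
  have "card {j \<in> {..<p}. spike k t \<theta> j \<noteq> 0} \<le> card {..k}"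
    by (intro card_mono) (auto simp: spike_def trunc_def)
  with \<open>k < p\<close> \<open>k < k'\<close> show ?thesis by (simp add: B0_def vecs_def l0_def spike_def trunc_def)
qed

lemma B0_ex_zero_le:
  assumes "u \<in> B0 p k" and "k < p"
  shows "\<exists>j\<le>k. u j = 0"
proof (rule ccontr)
  assume "\<not> (\<exists>j\<le>k. u j = 0)"
  with \<open>k < p\<close> have "card {..k} \<le> card {j \<in> {..<p}. u j \<noteq> 0}"
    by (intro card_mono) auto
  moreover have "card {j \<in> {..<p}. u j \<noteq> 0} \<le> k"
    using \<open>u \<in> B0 p k\<close> unfolding B0_def l0_def by blast
  ultimately show False unfolding card_atMost by linarith
qed

text \<open>Each sparse vector misses one of the first \<open>k + 1\<close> coordinates, on all of which the spiked
  vector is at least \<open>t\<close>.\<close>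
lemma d2_spike_B0_ge:
  assumes "k < p" and "0 < t" and "\<And>i. i < k \<Longrightarrow> t \<le> \<theta> i"
  shows "t \<le> d2 p (spike k t \<theta>) (B0 p k)"
  unfolding d2_def
proof (rule cInf_greatest)
  have "trunc k \<theta> \<in> B0 p k" using \<open>k < p\<close> by (simp add: trunc_in_B0)
  then show "(\<lambda>u. l2dist p (spike k t \<theta>) u) ` B0 p k \<noteq> {}" by blast
  fix x assume "x \<in> (\<lambda>u. l2dist p (spike k t \<theta>) u) ` B0 p k"
  then obtain u where u: "u \<in> B0 p k" and x: "x = l2dist p (spike k t \<theta>) u" by blast
  obtain j where j: "j \<le> k" "u j = 0" using B0_ex_zero_le[OF u \<open>k < p\<close>] by blast
  have "(spike k t \<theta> j - u j)\<^sup>2 \<le> (\<Sum>i<p. (spike k t \<theta> i - u i)\<^sup>2)"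
    using j \<open>k < p\<close> by (intro member_le_sum) auto
  then have "sqrt ((spike k t \<theta> j - u j)\<^sup>2) \<le> x"
    unfolding x l2dist_def by (rule real_sqrt_le_mono)
  then have "\<bar>spike k t \<theta> j\<bar> \<le> x" using j by simp
  moreover have "t \<le> \<bar>spike k t \<theta> j\<bar>"
  proof (cases "j = k")
    case False
    with j have "j < k" by simp
    with assms(3) have "t \<le> \<theta> j" by blast
    with \<open>j < k\<close> show ?thesis by (simp add: spike_def trunc_def abs_if)
  qed (use \<open>0 < t\<close> in \<open>simp add: spike_def\<close>)
  ultimately show "t \<le> x" by simp
qed

lemma sum_trunc: "k \<le> p \<Longrightarrow> (\<Sum>j<p. a j * trunc k \<theta> j) = (\<Sum>j<k. a j * \<theta> j)"
  by (rule sum.mono_neutral_cong_right) (auto simp: trunc_def)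

lemma sum_spike: "k < p \<Longrightarrow> (\<Sum>j<p. a j * spike k t \<theta> j) = (\<Sum>j<k. a j * \<theta> j) + a k * t"
proof -
  assume "k < p"
  then have "(\<Sum>j<p. a j * spike k t \<theta> j) = (\<Sum>j<Suc k. a j * spike k t \<theta> j)"
    by (intro sum.mono_neutral_cong_right) (auto simp: spike_def trunc_def)
  then show ?thesis by (simp add: spike_def trunc_def)
qed

text \<open>When column \<open>k\<close> of the design is \<open>X c\<close>, the spike \<open>t e\<^sub>k\<close> is indistinguishable from the
  shift \<open>t c\<close> of the first \<open>k\<close> coordinates.\<close>
lemma obs_map_spike_eq_trunc_shift:
  assumes "n \<le> k" "k < p" and c: "\<forall>i<n. (\<Sum>j<n. snd \<omega> (i,j) * c j) = snd \<omega> (i,k)"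
  shows "obs_map n p \<sigma> (spike k t \<theta>) \<omega> =
    obs_map n p \<sigma> (trunc k (\<lambda>i\<in>{..<k}. \<theta> i + t * (if i < n then c i else 0))) \<omega>"
proof -
  have "(\<Sum>j<p. snd \<omega> (i,j) * spike k t \<theta> j) =
      (\<Sum>j<p. snd \<omega> (i,j) * trunc k (\<lambda>i\<in>{..<k}. \<theta> i + t * (if i < n then c i else 0)) j)"
    if "i < n" for i
  proof -
    have "(\<Sum>j<k. snd \<omega> (i,j) * (if j < n then c j else 0)) = (\<Sum>j<n. snd \<omega> (i,j) * c j)"
      using \<open>n \<le> k\<close> by (intro sum.mono_neutral_cong_right) auto
    then have "(\<Sum>j<k. snd \<omega> (i,j) * (\<theta> j + t * (if j < n then c j else 0))) =
        (\<Sum>j<k. snd \<omega> (i,j) * \<theta> j) + snd \<omega> (i,k) * t"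
      using c that by (simp add: algebra_simps sum.distrib flip: sum_distrib_left)
    then show ?thesis
      using assms by (simp add: sum_spike sum_trunc)
  qed
  then show ?thesis unfolding obs_map_def by (auto simp: case_prod_beta intro!: restrict_ext)
qed

definition cube_prior :: "nat \<Rightarrow> real \<Rightarrow> real \<Rightarrow> (nat \<Rightarrow> real) measure" where
  "cube_prior k a W = uniform_measure (PiM {..<k} (\<lambda>_. lborel)) (PiE {..<k} (\<lambda>_. {a..a+W}))"

lemma sets_cube_prior [measurable_cong]: "sets (cube_prior k a W) = sets (PiM {..<k} (\<lambda>_. lborel))"
  by (simp add: cube_prior_def)

lemma space_cube_prior: "space (cube_prior k a W) = space (PiM {..<k} (\<lambda>_. lborel))"
  by (simp add: cube_prior_def)

lemma prob_space_cube_prior: "0 < W \<Longrightarrow> prob_space (cube_prior k a W)"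
  unfolding cube_prior_def
  by (intro prob_space_uniform_measure) (simp_all add: emeasure_PiM_lborel_box box_in_sets_PiM_lborel)

lemma AE_cube_prior: "AE \<theta> in cube_prior k a W. \<forall>i<k. a \<le> \<theta> i"
proof -
  have "AE \<theta> in PiM {..<k} (\<lambda>_. lborel). \<theta> \<in> PiE {..<k} (\<lambda>_. {a..a+W}) \<longrightarrow> (\<forall>i<k. a \<le> \<theta> i)"
    by (rule AE_I2) (auto simp: PiE_iff)
  then show ?thesis
    unfolding cube_prior_def by (rule AE_uniform_measureI[OF box_in_sets_PiM_lborel[OF finite_lessThan]])
qed

lemma borel_measurable_trunc:
  assumes "sets M = sets (PiM {..<k} (\<lambda>_. lborel))"
  shows "(\<lambda>\<theta>. trunc k \<theta> j) \<in> borel_measurable M"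
proof -
  have "(\<lambda>\<theta>. trunc k \<theta> j) \<in> borel_measurable (PiM {..<k} (\<lambda>_. lborel))"
  proof (cases "j < k")
    case True
    have "(\<lambda>\<theta>. \<theta> j) \<in> borel_measurable (PiM {..<k} (\<lambda>_. lborel))"
      using True measurable_component_singleton[of j "{..<k}" "\<lambda>_. lborel"]
      unfolding measurable_cong_sets[OF refl sets_lborel] by simp
    with True show ?thesis by (simp add: trunc_def)
  qed (simp add: trunc_def)
  then show ?thesis unfolding measurable_cong_sets[OF assms refl] .
qed

lemma borel_measurable_spike:
  "sets M = sets (PiM {..<k} (\<lambda>_. lborel)) \<Longrightarrow> (\<lambda>\<theta>. spike k t \<theta> j) \<in> borel_measurable M"
  using borel_measurable_trunc[of M k] by (simp add: spike_def)

lemma risk_ge_prior_rejection_gap: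
  assumes \<phi>: "is_test n p \<phi>" and \<pi>: "prob_space \<pi>"
    and f: "\<And>j. j < p \<Longrightarrow> (\<lambda>\<theta>. f \<theta> j) \<in> borel_measurable \<pi>"
    and g: "\<And>j. j < p \<Longrightarrow> (\<lambda>\<theta>. g \<theta> j) \<in> borel_measurable \<pi>"
    and null: "AE \<theta> in \<pi>. g \<theta> \<in> B0 p k0"
    and alt: "AE \<theta> in \<pi>. f \<theta> \<in> B0 p (k0 + \<Delta>) \<and> \<rho> * \<sigma> \<le> d2 p (f \<theta>) (B0 p k0)"
  shows "1 - (\<integral>\<omega>. prior_rejection n p \<sigma> \<phi> \<pi> f \<omega> - prior_rejection n p \<sigma> \<phi> \<pi> g \<omega> \<partial>noise_space n p)
    \<le> risk n p \<sigma> \<phi> k0 \<Delta> \<rho>"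
proof -
  interpret \<pi>: prob_space \<pi> by (rule \<pi>)
  let ?Alt = "{\<theta> \<in> B0 p (k0 + \<Delta>). d2 p \<theta> (B0 p k0) \<ge> \<rho> * \<sigma>}"
  have bdd: "bdd_above ((\<lambda>\<theta>. rej_prob n p \<sigma> \<theta> \<phi> b) ` A)" for b A
    by (intro bdd_aboveI[where M=1]) (auto simp: rej_prob_le_1)
  note Fubini_f = prior_rejection_Fubini[where f=f, OF \<phi> \<pi> f]
    and Fubini_g = prior_rejection_Fubini[where f=g, OF \<phi> \<pi> g]
  have "(\<integral>\<theta>. rej_prob n p \<sigma> (g \<theta>) \<phi> 1 \<partial>\<pi>) \<le> Sup ((\<lambda>\<theta>. rej_prob n p \<sigma> \<theta> \<phi> 1) ` B0 p k0)"
    using null by (intro \<pi>.integral_le_const Fubini_g(1)) (auto elim!: eventually_mono intro!: cSup_upper bdd)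
  moreover have "(\<integral>\<theta>. 1 - rej_prob n p \<sigma> (f \<theta>) \<phi> 1 \<partial>\<pi>) \<le> Sup ((\<lambda>\<theta>. rej_prob n p \<sigma> \<theta> \<phi> 0) ` ?Alt)"
  proof (intro \<pi>.integral_le_const Bochner_Integration.integrable_diff \<pi>.integrable_const Fubini_f(1))
    show "AE \<theta> in \<pi>. 1 - rej_prob n p \<sigma> (f \<theta>) \<phi> 1 \<le> Sup ((\<lambda>\<theta>. rej_prob n p \<sigma> \<theta> \<phi> 0) ` ?Alt)"
      using alt
    proof eventually_elim
      case (elim \<theta>)
      then have "rej_prob n p \<sigma> (f \<theta>) \<phi> 0 \<le> Sup ((\<lambda>\<theta>. rej_prob n p \<sigma> \<theta> \<phi> 0) ` ?Alt)"
        by (intro cSup_upper bdd) auto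
      then show ?case by (simp add: rej_prob_0_eq[OF \<phi>])
    qed
  qed
  ultimately show ?thesis
    using Fubini_f Fubini_g by (simp add: risk_def Bochner_Integration.integral_diff \<pi>.prob_space)
qed

definition spike_gap ::
  "nat \<Rightarrow> nat \<Rightarrow> real \<Rightarrow> ((nat \<Rightarrow> real) \<times> (nat \<times> nat \<Rightarrow> real) \<Rightarrow> nat) \<Rightarrow> nat \<Rightarrow> real \<Rightarrow> real \<Rightarrow>
    real \<Rightarrow> (nat \<Rightarrow> real) \<times> (nat \<times> nat \<Rightarrow> real) \<Rightarrow> real" where
  "spike_gap n p \<sigma> \<phi> k a t W \<omega> =
    prior_rejection n p \<sigma> \<phi> (cube_prior k a W) (spike k t) \<omega>
    - prior_rejection n p \<sigma> \<phi> (cube_prior k a W) (trunc k) \<omega>"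

lemma spike_gap_le_1:
  assumes "0 < W"
  shows "spike_gap n p \<sigma> \<phi> k a t W \<omega> \<le> 1"
proof -
  interpret prob_space "cube_prior k a W" using assms by (rule prob_space_cube_prior)
  show ?thesis unfolding spike_gap_def prior_rejection_def
    using prob_le_1 measure_nonneg by (smt (verit))
qed

lemma integrable_spike_gap:
  assumes "is_test n p \<phi>" and "0 < W"
  shows "integrable (noise_space n p) (spike_gap n p \<sigma> \<phi> k a t W)"
  unfolding spike_gap_def using prob_space_cube_prior[OF \<open>0 < W\<close>]
  by (intro Bochner_Integration.integrable_diff prior_rejection_Fubini(2)[OF assms(1)]
      borel_measurable_spike borel_measurable_trunc sets_cube_prior)

lemma spike_gap_le:
  assumes \<phi>: "is_test n p \<phi>" and k: "n \<le> k" "k < p" and W: "0 < W"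
    and \<omega>: "\<omega> \<in> space (noise_space n p)"
    and c: "\<forall>i<n. (\<Sum>j<n. snd \<omega> (i,j) * c j) = snd \<omega> (i,k)"
  shows "spike_gap n p \<sigma> \<phi> k a t W \<omega> \<le> 1 - (\<Prod>i<k. max 0 (W - \<bar>t * (if i < n then c i else 0)\<bar>)) / W ^ k"
proof -
  let ?P = "PiM {..<k} (\<lambda>_. lborel :: real measure)"
  define d where "d i = t * (if i < n then c i else 0)" for i
  define S where "S = {\<theta> \<in> space ?P. \<phi> (obs_map n p \<sigma> (trunc k \<theta>) \<omega>) = 1}"
  have "(\<lambda>_. \<omega>) \<in> measurable ?P (obs_space n p)"
    using \<omega> by (simp add: space_noise_space)
  then have S: "S \<in> sets ?P"
    unfolding S_def using borel_measurable_trunc[OF refl]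
    by (intro test_level_set_in_sets[OF \<phi>] measurable_obs_map)
  have "{\<theta> \<in> space ?P. \<phi> (obs_map n p \<sigma> (spike k t \<theta>) \<omega>) = 1} =
      {\<theta> \<in> space ?P. (\<lambda>i\<in>{..<k}. \<theta> i + d i) \<in> S}"
    unfolding S_def d_def obs_map_spike_eq_trunc_shift[OF k c] by (simp add: space_PiM)
  then have "prior_rejection n p \<sigma> \<phi> (cube_prior k a W) (spike k t) \<omega> =
      measure (cube_prior k a W) {\<theta> \<in> space ?P. (\<lambda>i\<in>{..<k}. \<theta> i + d i) \<in> S}"
    by (simp add: prior_rejection_def space_cube_prior)
  also have "\<dots> \<le> measure (cube_prior k a W) S + (1 - (\<Prod>i<k. max 0 (W - \<bar>d i\<bar>)) / W ^ k)"
    unfolding cube_prior_def using uniform_cube_translate_le[OF _ W S, of a d] by simp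
  also have "measure (cube_prior k a W) S = prior_rejection n p \<sigma> \<phi> (cube_prior k a W) (trunc k) \<omega>"
    by (simp add: prior_rejection_def space_cube_prior S_def)
  finally show ?thesis by (simp add: spike_gap_def d_def)
qed

lemma AE_spike_gap_tendsto_0:
  assumes \<phi>: "is_test n p \<phi>" and k: "n \<le> k" "k < p"
  shows "AE \<omega> in noise_space n p. (\<lambda>m. max 0 (spike_gap n p \<sigma> \<phi> k a t (Suc m) \<omega>)) \<longlonglongrightarrow> 0"
proof -
  have "n \<le> p" using k by simp
  from AE_noise_column_in_span[OF this, of k] AE_space show ?thesis
  proof eventually_elim
    case (elim \<omega>)
    then obtain c where c: "\<forall>i<n. (\<Sum>j<n. snd \<omega> (i,j) * c j) = snd \<omega> (i,k)"
      by blast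
    define overlap where "overlap m =
      (\<Prod>i<k. max 0 (real (Suc m) - \<bar>t * (if i < n then c i else 0)\<bar>)) / real (Suc m) ^ k" for m
    have upper: "max 0 (spike_gap n p \<sigma> \<phi> k a t (Suc m) \<omega>) \<le> max 0 (1 - overlap m)" for m
      unfolding overlap_def by (intro max.mono order.refl spike_gap_le[OF \<phi> k _ elim(2) c]) simp
    have "(\<lambda>m. max 0 (1 - overlap m)) \<longlonglongrightarrow> max 0 (1 - 1)"
      using cube_overlap_tendsto_1[where I="{..<k}" and d="\<lambda>i. t * (if i < n then c i else 0)"]
      unfolding overlap_def by (intro tendsto_intros) simp
    then have lim: "(\<lambda>m. max 0 (1 - overlap m)) \<longlonglongrightarrow> 0" by simp
    show ?case
    proof (rule tendsto_sandwich[OF always_eventually always_eventually tendsto_const lim])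
      show "\<forall>m. 0 \<le> max 0 (spike_gap n p \<sigma> \<phi> k a t (Suc m) \<omega>)" by simp
      show "\<forall>m. max 0 (spike_gap n p \<sigma> \<phi> k a t (Suc m) \<omega>) \<le> max 0 (1 - overlap m)"
        using upper by blast
    qed
  qed
qed

lemma integral_spike_gap_less:
  assumes \<phi>: "is_test n p \<phi>" and k: "n \<le> k" "k < p" and "0 < \<epsilon>"
  shows "\<exists>W>0. (\<integral>\<omega>. spike_gap n p \<sigma> \<phi> k a t W \<omega> \<partial>noise_space n p) < \<epsilon>"
proof -
  let ?N = "noise_space n p"
  let ?gap = "\<lambda>m. spike_gap n p \<sigma> \<phi> k a t (Suc m)"
  interpret N: prob_space ?N by (rule prob_space_noise_space)
  have gap_int: "integrable ?N (?gap m)" for m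
    using integrable_spike_gap[OF \<phi>] by simp
  have max_meas: "(\<lambda>\<omega>. max 0 (?gap m \<omega>)) \<in> borel_measurable ?N" for m
    by (intro borel_measurable_max borel_measurable_const borel_measurable_integrable gap_int)
  have "(\<lambda>m. \<integral>\<omega>. max 0 (?gap m \<omega>) \<partial>?N) \<longlonglongrightarrow> (\<integral>\<omega>. 0 \<partial>?N)"
    by (rule integral_dominated_convergence[where w="\<lambda>_. 1",
          OF borel_measurable_const max_meas N.integrable_const AE_spike_gap_tendsto_0[OF \<phi> k]])
      (simp add: spike_gap_le_1)
  then have "\<forall>\<^sub>F m in sequentially. (\<integral>\<omega>. max 0 (?gap m \<omega>) \<partial>?N) < \<epsilon>"
    using \<open>0 < \<epsilon>\<close> by (simp add: order_tendsto_iff)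
  then obtain m where m: "(\<integral>\<omega>. max 0 (?gap m \<omega>) \<partial>?N) < \<epsilon>"
    by (auto simp: eventually_sequentially)
  have "(\<integral>\<omega>. ?gap m \<omega> \<partial>?N) \<le> (\<integral>\<omega>. max 0 (?gap m \<omega>) \<partial>?N)"
    using spike_gap_le_1
    by (intro integral_mono gap_int N.integrable_const_bound[where B=1, OF AE_I2 max_meas]) simp_all
  with m show ?thesis by (intro exI[of _ "real (Suc m)"]) simp
qed

theorem proposition1:
  fixes n p k0 \<Delta> :: nat and \<sigma> \<gamma> \<rho> :: real
    and \<phi> :: "(nat \<Rightarrow> real) \<times> (nat \<times> nat \<Rightarrow> real) \<Rightarrow> nat"
  assumes "1 \<le> n" and "1 \<le> k0" and "k0 < p" and "n \<le> k0"
    and "\<sigma> > 0"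
    and "\<gamma> < 1/2"
    and "1 \<le> \<Delta>" and "\<Delta> \<le> p - k0"
    and "\<rho> > 0"
    and "is_test n p \<phi>"
  shows "risk n p \<sigma> \<phi> k0 \<Delta> \<rho> > \<gamma>"
proof -
  let ?t = "\<rho> * \<sigma>"
  obtain W where W: "0 < W" and gap: "(\<integral>\<omega>. spike_gap n p \<sigma> \<phi> k0 ?t ?t W \<omega> \<partial>noise_space n p) < 1/2"
    using integral_spike_gap_less[where \<sigma>=\<sigma> and a="\<rho> * \<sigma>" and t="\<rho> * \<sigma>" and \<epsilon>="1/2",
        OF \<open>is_test n p \<phi>\<close> \<open>n \<le> k0\<close> \<open>k0 < p\<close>]
    by auto
  have null: "AE \<theta> in cube_prior k0 ?t W. trunc k0 \<theta> \<in> B0 p k0"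
    using \<open>k0 < p\<close> by (simp add: trunc_in_B0)
  have alt: "AE \<theta> in cube_prior k0 ?t W.
      spike k0 ?t \<theta> \<in> B0 p (k0 + \<Delta>) \<and> ?t \<le> d2 p (spike k0 ?t \<theta>) (B0 p k0)"
    using AE_cube_prior[of k0 ?t W]
    by eventually_elim (use assms in \<open>simp add: spike_in_B0 d2_spike_B0_ge\<close>)
  have "1 - (\<integral>\<omega>. spike_gap n p \<sigma> \<phi> k0 ?t ?t W \<omega> \<partial>noise_space n p) \<le> risk n p \<sigma> \<phi> k0 \<Delta> \<rho>"
    unfolding spike_gap_def
    by (rule risk_ge_prior_rejection_gap[OF \<open>is_test n p \<phi>\<close> prob_space_cube_prior[OF W]
          borel_measurable_spike[OF sets_cube_prior] borel_measurable_trunc[OF sets_cube_prior] null alt])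
  with gap \<open>\<gamma> < 1/2\<close> show ?thesis by linarith
qed

end
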